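(* For every round $r$ and every validator $v$, at most one block of round $r$ authored by $v$ has a certificate.
   Context: There are $n=3f+1$ validators, at most $f$ Byzantine; honest validators create exactly one block per round, Byzantine ones may create several blocks in the same round (equivocation). Every valid block of round $r$ has as parents at least $2f+1$ blocks of round $r-1$ from distinct validators. A block $b$ of round $r'$ is a vote for a block $L$ of round $r<r'$ with author $a$ if the first block with author $a$ and round $r$ encountered in the deterministic depth-first search from $b$ along parent references is $L$ (so a block votes for at most one block of a given author and round). For a fixed wave length $w\ge 4$, a block $c$ of round $r+w-1$ is a certificate for a block $L$ of round $r$ if at least $2f+1$ of $c$'s parents (blocks of round $r+w-2$) are votes for $L$; a block "has a certificate" if some such $c$ exists. *)

theory Defs
  imports Main
begin

text \<open>Blocks are elements of an abstract type 'b, with an author (a validator of type 'v),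
a round number, and an ordered list of parent references (the order fixes the
deterministic depth-first search).\<close>

text \<open>Depth-first (pre-order) traversal from a block along parent references; the fuel
argument is the round number, which strictly decreases along parent edges.  In a DAG,
the order of first occurrences in this unfolded traversal coincides with the order in
which a DFS with a visited set first encounters the blocks.\<close>
fun dfs_aux :: "('b \<Rightarrow> 'b list) \<Rightarrow> nat \<Rightarrow> 'b \<Rightarrow> 'b list" where
  "dfs_aux par 0 b = [b]"
| "dfs_aux par (Suc k) b = b # concat (map (dfs_aux par k) (par b))"

definition dfs :: "('b \<Rightarrow> nat) \<Rightarrow> ('b \<Rightarrow> 'b list) \<Rightarrow> 'b \<Rightarrow> 'b list" where
  "dfs rnd par b = dfs_aux par (rnd b) b"

definition valid_dag ::
  "('b \<Rightarrow> 'v) \<Rightarrow> ('b \<Rightarrow> nat) \<Rightarrow> ('b \<Rightarrow> 'b list) \<Rightarrow> 'v set \<Rightarrow> nat \<Rightarrow> 'b set \<Rightarrow> bool" where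
  "valid_dag auth rnd par V f B \<longleftrightarrow>
     (\<forall>b\<in>B. auth b \<in> V
        \<and> set (par b) \<subseteq> B
        \<and> distinct (par b)
        \<and> (\<forall>p\<in>set (par b). rnd p + 1 = rnd b)
        \<and> inj_on auth (set (par b))
        \<and> (0 < rnd b \<longrightarrow> 2 * f + 1 \<le> length (par b)))"

definition is_vote ::
  "('b \<Rightarrow> 'v) \<Rightarrow> ('b \<Rightarrow> nat) \<Rightarrow> ('b \<Rightarrow> 'b list) \<Rightarrow> 'b \<Rightarrow> 'b \<Rightarrow> bool" where
  "is_vote auth rnd par b L \<longleftrightarrow>
     rnd L < rnd b \<and>
     find (\<lambda>x. auth x = auth L \<and> rnd x = rnd L) (dfs rnd par b) = Some L"

definition is_certificate ::
  "('b \<Rightarrow> 'v) \<Rightarrow> ('b \<Rightarrow> nat) \<Rightarrow> ('b \<Rightarrow> 'b list) \<Rightarrow> nat \<Rightarrow> nat \<Rightarrow> 'b \<Rightarrow> 'b \<Rightarrow> bool" where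
  "is_certificate auth rnd par f w c L \<longleftrightarrow>
     rnd c = rnd L + w - 1 \<and>
     2 * f + 1 \<le> card {p \<in> set (par c). is_vote auth rnd par p L}"

definition has_certificate ::
  "('b \<Rightarrow> 'v) \<Rightarrow> ('b \<Rightarrow> nat) \<Rightarrow> ('b \<Rightarrow> 'b list) \<Rightarrow> nat \<Rightarrow> nat \<Rightarrow> 'b set \<Rightarrow> 'b \<Rightarrow> bool" where
  "has_certificate auth rnd par f w B L \<longleftrightarrow> (\<exists>c\<in>B. is_certificate auth rnd par f w c L)"

end

theory Submission
  imports Defs
begin

text \<open>Two certificates for blocks of the same round and author each rest on votes from
2f+1 distinct validators among n = 3f+1, so their voter sets share f+1 validators, one of
them honest. That honest validator has a single block in the voting round, and a block
votes for at most one block of a given author and round.\<close>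

lemma is_vote_unique:
  assumes "is_vote auth rnd par b L1" and "is_vote auth rnd par b L2"
    and "auth L1 = auth L2" and "rnd L1 = rnd L2"
  shows "L1 = L2"
  using assms unfolding is_vote_def by (metis option.inject)

definition parent_votes ::
  "('b \<Rightarrow> 'v) \<Rightarrow> ('b \<Rightarrow> nat) \<Rightarrow> ('b \<Rightarrow> 'b list) \<Rightarrow> 'b \<Rightarrow> 'b \<Rightarrow> 'b set" where
  "parent_votes auth rnd par c L = {p \<in> set (par c). is_vote auth rnd par p L}"

lemma card_Un_Int_le:
  assumes "finite V" and "S1 \<subseteq> V" and "S2 \<subseteq> V"
  shows "card S1 + card S2 \<le> card V + card (S1 \<inter> S2)"
proof -
  have "card S1 + card S2 = card (S1 \<union> S2) + card (S1 \<inter> S2)"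
    using card_Un_Int finite_subset assms by metis
  moreover have "card (S1 \<union> S2) \<le> card V"
    using assms by (intro card_mono) auto
  ultimately show ?thesis
    by linarith
qed

lemma quorums_share_honest:
  assumes "finite V" and "card V = 3 * f + 1" and "finite Byz" and "card Byz \<le> f"
    and "S1 \<subseteq> V" and "S2 \<subseteq> V" and "2 * f + 1 \<le> card S1" and "2 * f + 1 \<le> card S2"
  obtains h where "h \<in> S1" and "h \<in> S2" and "h \<notin> Byz"
proof -
  have "f + 1 \<le> card (S1 \<inter> S2)"
    using card_Un_Int_le[OF assms(1,5,6)] assms(2,7,8) by linarith
  then have "\<not> S1 \<inter> S2 \<subseteq> Byz"
    using card_mono[OF \<open>finite Byz\<close>, of "S1 \<inter> S2"] \<open>card Byz \<le> f\<close> by linarith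
  then show ?thesis
    using that by blast
qed

lemma certificate_voter_authors:
  assumes dag: "valid_dag auth rnd par V f B"
    and "c \<in> B" and "is_certificate auth rnd par f w c L"
  shows "auth ` parent_votes auth rnd par c L \<subseteq> V"
    and "2 * f + 1 \<le> card (auth ` parent_votes auth rnd par c L)"
proof -
  have parents: "set (par c) \<subseteq> B" "inj_on auth (set (par c))"
    using dag \<open>c \<in> B\<close> unfolding valid_dag_def by blast+
  then show "auth ` parent_votes auth rnd par c L \<subseteq> V"
    using dag unfolding valid_dag_def parent_votes_def by blast
  have "inj_on auth (parent_votes auth rnd par c L)"
    using parents(2) by (rule inj_on_subset) (auto simp: parent_votes_def)
  then show "2 * f + 1 \<le> card (auth ` parent_votes auth rnd par c L)"
    using \<open>is_certificate auth rnd par f w c L\<close>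
    by (simp add: card_image is_certificate_def parent_votes_def)
qed

lemma parent_votes_round:
  assumes "valid_dag auth rnd par V f B" and "c \<in> B" and "is_certificate auth rnd par f w c L"
    and "p \<in> parent_votes auth rnd par c L"
  shows "p \<in> B" and "rnd p + 1 = rnd L + w - 1"
  using assms unfolding valid_dag_def is_certificate_def parent_votes_def by auto

theorem lemma2:
  fixes auth :: "'b \<Rightarrow> 'v" and rnd :: "'b \<Rightarrow> nat" and par :: "'b \<Rightarrow> 'b list"
    and V Byz :: "'v set" and f w :: nat and B :: "'b set"
  assumes "finite V" and "card V = 3 * f + 1"
    and "Byz \<subseteq> V" and "card Byz \<le> f"
    and "valid_dag auth rnd par V f B"
    and honest: "\<And>b1 b2. b1 \<in> B \<Longrightarrow> b2 \<in> B \<Longrightarrow> auth b1 \<in> V - Byz \<Longrightarrow>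
                   auth b1 = auth b2 \<Longrightarrow> rnd b1 = rnd b2 \<Longrightarrow> b1 = b2"
    and "4 \<le> w"
  shows "\<forall>r v L1 L2. L1 \<in> B \<and> L2 \<in> B \<and> rnd L1 = r \<and> rnd L2 = r \<and> auth L1 = v \<and> auth L2 = v
           \<and> has_certificate auth rnd par f w B L1 \<and> has_certificate auth rnd par f w B L2
           \<longrightarrow> L1 = L2"
proof (intro allI impI)
  fix r v L1 L2
  assume L: "L1 \<in> B \<and> L2 \<in> B \<and> rnd L1 = r \<and> rnd L2 = r \<and> auth L1 = v \<and> auth L2 = v
           \<and> has_certificate auth rnd par f w B L1 \<and> has_certificate auth rnd par f w B L2"
  then obtain c1 c2 where c: "c1 \<in> B" "is_certificate auth rnd par f w c1 L1"
      "c2 \<in> B" "is_certificate auth rnd par f w c2 L2"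
    unfolding has_certificate_def by blast
  note voters1 = certificate_voter_authors[OF \<open>valid_dag auth rnd par V f B\<close> c(1,2)]
  note voters2 = certificate_voter_authors[OF \<open>valid_dag auth rnd par V f B\<close> c(3,4)]
  obtain h where "h \<in> auth ` parent_votes auth rnd par c1 L1"
      "h \<in> auth ` parent_votes auth rnd par c2 L2" "h \<notin> Byz"
    using quorums_share_honest[OF assms(1,2) finite_subset[OF assms(3,1)] assms(4)
        voters1(1) voters2(1) voters1(2) voters2(2)] .
  then obtain p1 p2 where p: "p1 \<in> parent_votes auth rnd par c1 L1"
      "p2 \<in> parent_votes auth rnd par c2 L2" "auth p1 = h" "auth p2 = h"
    by (metis imageE)
  note p1 = parent_votes_round[OF \<open>valid_dag auth rnd par V f B\<close> c(1,2) p(1)]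
  note p2 = parent_votes_round[OF \<open>valid_dag auth rnd par V f B\<close> c(3,4) p(2)]
  have "h \<in> V - Byz"
    using voters1(1) p(1,3) \<open>h \<notin> Byz\<close> by blast
  then have "p1 = p2"
    using honest[OF p1(1) p2(1)] p1(2) p2(2) p(3,4) L by simp
  with p(1,2) L show "L1 = L2"
    by (auto simp: parent_votes_def intro: is_vote_unique)
qed

end
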